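(* Let $a>0$, $\beta>0$, let $\lambda$ be feasible, let $0<\xi<a/2$, let $\rho\in\mathcal{P}$, and suppose $d_0\ge\tau(\beta)a$. Then $\lim_{\delta\to0^+}T_2=0$, where \[ T_2=C_5\,\delta\,(\lambda^2\delta^{2\beta}+4)\int_0^{k_0(\delta)}\mathrm{e}^{-2k(d_0-3a)}\mathrm{e}^{-4ka}\left(\frac{\mathrm{e}^{2k\xi}-1}{k}\right)\mathrm{d}k,\qquad C_5=\frac{(d_1-d_0)\|\rho\|^2_{L^2(\mathcal{M})}}{9\pi}. \]
   Context: For $0<\delta<1$ and constants $\beta>0$, $\lambda\in\mathbb{R}$, put $\mu=\delta+\lambda\delta^{\beta}$. The constant $\lambda$ is feasible if $\lambda>0$ when $0<\beta<1$, $\lambda\ge-1$ when $\beta=1$, $\lambda\ne0$ when $\beta>1$; $\delta_\mu\in(0,1)$ is a number with $\mu\ge0$ for $0<\delta\le\delta_\mu$. $k_0(\delta)=\frac{1}{2a}\ln\left(\frac{1}{2\delta^2+\lambda\delta^{\beta+1}}\right)$, and $\delta$ ranges over $0<\delta\le\delta_0$, where $0<\delta_0\le\delta_\mu$ is such that $k_0(\delta)>0$ for $0<\delta\le\delta_0$. $\tau(\beta)=\frac{\beta+2}{\beta+1}$ for $0<\beta<1$ and $\tau(\beta)=\frac32$ for $\beta\ge1$. Let $\mathcal{M}=\{(x,y):x>a\}$; $\mathcal{P}$ is the set of real-valued $\rho\in L^2(\mathcal{M})\cap L^\infty(\mathcal{M})$ with compact support in $\mathcal{M}$, $0<|\operatorname{supp}\rho|<\infty$,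 and $\int\!\!\int\rho=0$; $d_0=\min\{x:(x,y)\in\operatorname{supp}\rho\}$, $d_1=\max\{x:(x,y)\in\operatorname{supp}\rho\}$. *)

theory Defs
  imports "HOL-Analysis.Analysis"
begin

definition feasible :: "real \<Rightarrow> real \<Rightarrow> bool" where
  "feasible \<beta> lam \<longleftrightarrow>
     (\<beta> < 1 \<longrightarrow> lam > 0) \<and> (\<beta> = 1 \<longrightarrow> lam \<ge> -1) \<and> (\<beta> > 1 \<longrightarrow> lam \<noteq> 0)"

definition tau :: "real \<Rightarrow> real" where
  "tau \<beta> = (if \<beta> < 1 then (\<beta> + 2) / (\<beta> + 1) else 3 / 2)"

definition k0 :: "real \<Rightarrow> real \<Rightarrow> real \<Rightarrow> real \<Rightarrow> real" where
  "k0 a \<beta> lam \<delta> = 1 / (2 * a) * ln (1 / (2 * \<delta>\<^sup>2 + lam * \<delta> powr (\<beta> + 1)))"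

definition halfplane :: "real \<Rightarrow> (real \<times> real) set" where
  "halfplane a = {p. fst p > a}"

definition supp :: "(real \<times> real \<Rightarrow> real) \<Rightarrow> (real \<times> real) set" where
  "supp \<rho> = closure {p. \<rho> p \<noteq> 0}"

definition classP :: "real \<Rightarrow> (real \<times> real \<Rightarrow> real) \<Rightarrow> bool" where
  "classP a \<rho> \<longleftrightarrow>
     \<rho> \<in> borel_measurable lborel \<and>
     integrable lborel (\<lambda>p. (\<rho> p)\<^sup>2) \<and>
     (\<exists>C. AE p in lborel. \<bar>\<rho> p\<bar> \<le> C) \<and>
     compact (supp \<rho>) \<and> supp \<rho> \<subseteq> halfplane a \<and>
     0 < emeasure lborel (supp \<rho>) \<and> emeasure lborel (supp \<rho>) < \<infinity> \<and>
     integral\<^sup>L lborel \<rho> = 0"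

definition d0 :: "(real \<times> real \<Rightarrow> real) \<Rightarrow> real" where
  "d0 \<rho> = Inf (fst ` supp \<rho>)"

definition d1 :: "(real \<times> real \<Rightarrow> real) \<Rightarrow> real" where
  "d1 \<rho> = Sup (fst ` supp \<rho>)"

definition L2sq :: "real \<Rightarrow> (real \<times> real \<Rightarrow> real) \<Rightarrow> real" where
  "L2sq a \<rho> = (\<integral>p\<in>halfplane a. (\<rho> p)\<^sup>2 \<partial>lborel)"

definition C5 :: "real \<Rightarrow> (real \<times> real \<Rightarrow> real) \<Rightarrow> real" where
  "C5 a \<rho> = (d1 \<rho> - d0 \<rho>) * L2sq a \<rho> / (9 * pi)"

definition T2 :: "real \<Rightarrow> real \<Rightarrow> real \<Rightarrow> real \<Rightarrow> (real \<times> real \<Rightarrow> real) \<Rightarrow> real \<Rightarrow> real" where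
  "T2 a \<beta> lam \<xi> \<rho> \<delta> =
     C5 a \<rho> * \<delta> * (lam\<^sup>2 * \<delta> powr (2 * \<beta>) + 4) *
     integral {0..k0 a \<beta> lam \<delta>}
       (\<lambda>k. exp (-2 * k * (d0 \<rho> - 3 * a)) * exp (-4 * k * a) * ((exp (2 * k * \<xi>) - 1) / k))"

end

theory Submission
  imports Defs "HOL-Real_Asymp.Real_Asymp"
begin

text \<open>Since \<open>d0 \<ge> 3a/2 > a + \<xi>\<close>, the integrand of \<open>T2\<close> is
  \<open>exp(-2k(d0 - a)) (exp(2k\<xi>) - 1)/k \<le> 2\<xi> exp(-2k(d0 - a - \<xi>)) \<le> 2\<xi>\<close>, so the integral is at
  most \<open>2\<xi> k0(\<delta>)\<close>. Feasibility of \<open>\<lambda>\<close> bounds \<open>2\<delta>\<^sup>2 + \<lambda>\<delta>^(\<beta>+1)\<close> below by a power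
  \<open>c\<delta>^p\<close>, hence \<open>k0(\<delta>) = O(|ln \<delta>|)\<close> and \<open>\<delta> k0(\<delta>) \<rightarrow> 0\<close>, while the remaining factors of
  \<open>T2\<close> stay bounded. Nothing about \<open>\<rho>\<close> is used: \<open>C5\<close> only enters as a constant factor.\<close>

lemma exp_minus_one_le_mult_exp:
  fixes x :: real
  assumes "0 \<le> x"
  shows "exp x - 1 \<le> x * exp x"
proof -
  have "(1 - x) * exp x \<le> exp (-x) * exp x"
    using exp_ge_add_one_self[of "-x"] by (intro mult_right_mono) auto
  then show ?thesis
    by (simp add: exp_minus field_simps)
qed

lemma T2_integrand_bounds:
  fixes k D a \<xi> :: real
  assumes "0 \<le> k" and "0 < \<xi>" and "\<xi> \<le> D - a"
  defines "f \<equiv> exp (-2 * k * (D - 3 * a)) * exp (-4 * k * a) * ((exp (2 * k * \<xi>) - 1) / k)"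
  shows "0 \<le> f" and "f \<le> 2 * \<xi>"
proof -
  have f_eq: "f = exp (-2 * k * (D - a)) * ((exp (2 * k * \<xi>) - 1) / k)"
    unfolding f_def by (simp add: exp_add[symmetric] algebra_simps)
  show "0 \<le> f"
    unfolding f_eq using assms by (intro mult_nonneg_nonneg divide_nonneg_nonneg) auto
  show "f \<le> 2 * \<xi>"
  proof (cases "k = 0")
    case True
    then show ?thesis
      using assms by (simp add: f_def)
  next
    case False
    with assms have "0 < k" by simp
    have "(exp (2 * k * \<xi>) - 1) / k \<le> 2 * \<xi> * exp (2 * k * \<xi>)"
      using exp_minus_one_le_mult_exp[of "2 * k * \<xi>"] \<open>0 < k\<close> assms
      by (simp add: divide_le_eq algebra_simps)
    then have "f \<le> exp (-2 * k * (D - a)) * (2 * \<xi> * exp (2 * k * \<xi>))"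
      unfolding f_eq by (intro mult_left_mono) auto
    also have "\<dots> = 2 * \<xi> * exp (-2 * k * (D - a - \<xi>))"
      by (simp add: exp_add[symmetric] algebra_simps)
    also have "\<dots> \<le> 2 * \<xi>"
      using assms \<open>0 < k\<close> by simp
    finally show ?thesis .
  qed
qed

lemma abs_integral_le_bound_mult_length:
  fixes f :: "real \<Rightarrow> real"
  assumes "l \<le> u" and "\<And>k. k \<in> {l..u} \<Longrightarrow> 0 \<le> f k \<and> f k \<le> M"
  shows "\<bar>integral {l..u} f\<bar> \<le> M * (u - l)"
proof (cases "f integrable_on {l..u}")
  case True
  have "0 \<le> integral {l..u} f"
    using True assms by (intro integral_nonneg) auto
  moreover have "integral {l..u} f \<le> integral {l..u} (\<lambda>_. M)"
    using True assms by (intro integral_le) auto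
  ultimately show ?thesis
    using assms by (simp add: mult.commute)
next
  case False
  then show ?thesis
    using assms(1) assms(2)[of l] by (simp add: not_integrable_integral)
qed

lemma tau_ge_three_halves:
  assumes "\<beta> > 0"
  shows "3 / 2 \<le> tau \<beta>"
  using assms by (auto simp: tau_def field_simps)

lemma feasible_k0_denominator_ge_power:
  fixes \<beta> lam :: real
  assumes "\<beta> > 0" and "feasible \<beta> lam"
  obtains c p where "c > 0" and "p > 0"
    and "\<forall>\<^sub>F \<delta> in at_right 0. c * \<delta> powr p \<le> 2 * \<delta>\<^sup>2 + lam * \<delta> powr (\<beta> + 1)"
proof -
  have pos: "\<forall>\<^sub>F \<delta> in at_right (0::real). \<delta> > 0"
    by (simp add: eventually_at_right_less)
  consider "\<beta> < 1" | "\<beta> = 1" | "\<beta> > 1"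
    by linarith
  then show ?thesis
  proof cases
    case 1
    with assms have "lam > 0"
      by (auto simp: feasible_def)
    then show ?thesis
      using assms by (intro that[of lam "\<beta> + 1"]) auto
  next
    case 2
    with assms have "lam \<ge> -1"
      by (auto simp: feasible_def)
    have "\<forall>\<^sub>F \<delta> in at_right (0::real). 1 * \<delta> powr 2 \<le> 2 * \<delta>\<^sup>2 + lam * \<delta> powr (\<beta> + 1)"
      using pos
    proof eventually_elim
      case (elim \<delta>)
      have "(-1) * \<delta>\<^sup>2 \<le> lam * \<delta>\<^sup>2"
        using \<open>lam \<ge> -1\<close> by (intro mult_right_mono) auto
      then show ?case
        using 2 elim by simp
    qed
    then show ?thesis
      by (intro that[of 1 2]) auto
  next
    case 3
    have "((\<lambda>\<delta>::real. \<bar>lam\<bar> * \<delta> powr (\<beta> - 1)) \<longlongrightarrow> \<bar>lam\<bar> * 0) (at_right 0)"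
      using 3 by (intro tendsto_intros tendsto_zero_powrI[where b = "\<beta> - 1"])
        (auto intro: eventually_at_rightI[of 0 1])
    then have "\<forall>\<^sub>F \<delta> in at_right (0::real). \<bar>lam\<bar> * \<delta> powr (\<beta> - 1) < 1"
      by (intro order_tendstoD) auto
    then have "\<forall>\<^sub>F \<delta> in at_right (0::real). 1 * \<delta> powr 2 \<le> 2 * \<delta>\<^sup>2 + lam * \<delta> powr (\<beta> + 1)"
      using pos
    proof eventually_elim
      case (elim \<delta>)
      have powr_split: "\<delta> powr (\<beta> + 1) = \<delta>\<^sup>2 * \<delta> powr (\<beta> - 1)"
        using powr_add[of \<delta> 2 "\<beta> - 1"] elim by (simp add: add.commute)
      have "-1 \<le> lam * \<delta> powr (\<beta> - 1)"
        using elim abs_ge_minus_self[of "lam * \<delta> powr (\<beta> - 1)"] by (simp add: abs_mult)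
      then have "\<delta>\<^sup>2 * (-1) \<le> \<delta>\<^sup>2 * (lam * \<delta> powr (\<beta> - 1))"
        by (intro mult_left_mono) auto
      then show ?case
        using powr_split elim by (simp add: algebra_simps)
    qed
    then show ?thesis
      by (intro that[of 1 2]) auto
  qed
qed

lemma k0_eventually_log_bounded:
  fixes a \<beta> lam :: real
  assumes "a > 0" and "\<beta> > 0" and "feasible \<beta> lam"
  obtains c p :: real
  where "\<forall>\<^sub>F \<delta> in at_right 0. 0 \<le> k0 a \<beta> lam \<delta>"
    and "\<forall>\<^sub>F \<delta> in at_right 0. k0 a \<beta> lam \<delta> \<le> (- ln c - p * ln \<delta>) / (2 * a)"
proof -
  define X where "X \<delta> = 2 * \<delta>\<^sup>2 + lam * \<delta> powr (\<beta> + 1)" for \<delta> :: real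
  obtain c p where "c > 0" "p > 0" and lower: "\<forall>\<^sub>F \<delta> in at_right 0. c * \<delta> powr p \<le> X \<delta>"
    using feasible_k0_denominator_ge_power[OF assms(2,3)] unfolding X_def by blast
  have "(X \<longlongrightarrow> 2 * 0\<^sup>2 + lam * 0) (at_right 0)"
    unfolding X_def using assms(2)
    by (intro tendsto_intros tendsto_zero_powrI[where b = "\<beta> + 1"])
      (auto intro: eventually_at_rightI[of 0 1])
  then have upper: "\<forall>\<^sub>F \<delta> in at_right 0. X \<delta> < 1"
    by (intro order_tendstoD) auto
  have "\<forall>\<^sub>F \<delta> in at_right 0. 0 \<le> k0 a \<beta> lam \<delta> \<and> k0 a \<beta> lam \<delta> \<le> (- ln c - p * ln \<delta>) / (2 * a)"
    using eventually_at_right_less[of 0] lower upper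
  proof eventually_elim
    case (elim \<delta>)
    have "0 < c * \<delta> powr p"
      using \<open>c > 0\<close> elim by simp
    with elim have "0 < X \<delta>"
      by linarith
    have k0_eq: "k0 a \<beta> lam \<delta> = ln (1 / X \<delta>) / (2 * a)"
      by (simp add: k0_def X_def)
    have "ln (1 / X \<delta>) \<le> ln (1 / (c * \<delta> powr p))"
      using \<open>0 < X \<delta>\<close> \<open>0 < c * \<delta> powr p\<close> elim by (simp add: divide_simps)
    also have "\<dots> = - ln c - p * ln \<delta>"
      using \<open>c > 0\<close> elim by (simp add: ln_div ln_mult)
    finally show ?case
      unfolding k0_eq using \<open>0 < X \<delta>\<close> elim assms(1) by (simp add: divide_right_mono)
  qed
  then show ?thesis
    using that eventually_conj_iff by blast
qed

lemma delta_mult_k0_tendsto_zero: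
  fixes a \<beta> lam :: real
  assumes "a > 0" and "\<beta> > 0" and "feasible \<beta> lam"
  shows "((\<lambda>\<delta>. \<delta> * k0 a \<beta> lam \<delta>) \<longlongrightarrow> 0) (at_right 0)"
proof -
  obtain c p where nonneg: "\<forall>\<^sub>F \<delta> in at_right 0. 0 \<le> k0 a \<beta> lam \<delta>"
    and log_bound: "\<forall>\<^sub>F \<delta> in at_right 0. k0 a \<beta> lam \<delta> \<le> (- ln c - p * ln \<delta>) / (2 * a)"
    by (rule k0_eventually_log_bounded[OF assms])
  define u where "u \<delta> = (\<delta> * (- ln c) - p * (\<delta> * ln \<delta>)) / (2 * a)" for \<delta> :: real
  have "((\<lambda>\<delta>::real. \<delta> * ln \<delta>) \<longlongrightarrow> 0) (at_right 0)"
    by real_asymp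
  then have "(u \<longlongrightarrow> (0 * (- ln c) - p * 0) / (2 * a)) (at_right 0)"
    unfolding u_def using assms(1) by (intro tendsto_intros) auto
  then have u_tendsto: "(u \<longlongrightarrow> 0) (at_right 0)"
    by simp
  have lower: "\<forall>\<^sub>F \<delta> in at_right 0. 0 \<le> \<delta> * k0 a \<beta> lam \<delta>"
    using eventually_at_right_less[of 0] nonneg by eventually_elim simp
  have upper: "\<forall>\<^sub>F \<delta> in at_right 0. \<delta> * k0 a \<beta> lam \<delta> \<le> u \<delta>"
    using eventually_at_right_less[of 0] log_bound
  proof eventually_elim
    case (elim \<delta>)
    then have "\<delta> * k0 a \<beta> lam \<delta> \<le> \<delta> * ((- ln c - p * ln \<delta>) / (2 * a))"
      by (intro mult_left_mono) auto
    also have "\<dots> = u \<delta>"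
      by (simp add: u_def algebra_simps diff_divide_distrib)
    finally show ?case .
  qed
  show ?thesis
    by (rule tendsto_sandwich[OF lower upper tendsto_const u_tendsto])
qed

lemma abs_T2_le_delta_mult_k0:
  assumes "0 < \<delta>" and "\<delta> < 1" and "\<beta> > 0" and "0 \<le> k0 a \<beta> lam \<delta>"
    and "0 < \<xi>" and "\<xi> \<le> d0 \<rho> - a"
  shows "\<bar>T2 a \<beta> lam \<xi> \<rho> \<delta>\<bar> \<le> \<bar>C5 a \<rho>\<bar> * (lam\<^sup>2 + 4) * (2 * \<xi>) * (\<delta> * k0 a \<beta> lam \<delta>)"
proof -
  define I where "I = integral {0..k0 a \<beta> lam \<delta>}
    (\<lambda>k. exp (-2 * k * (d0 \<rho> - 3 * a)) * exp (-4 * k * a) * ((exp (2 * k * \<xi>) - 1) / k))"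
  have "\<bar>I\<bar> \<le> 2 * \<xi> * (k0 a \<beta> lam \<delta> - 0)"
    unfolding I_def using assms T2_integrand_bounds[OF _ assms(5,6)]
    by (intro abs_integral_le_bound_mult_length) auto
  then have I_bound: "\<bar>I\<bar> \<le> 2 * \<xi> * k0 a \<beta> lam \<delta>"
    by simp
  have "\<delta> powr (2 * \<beta>) \<le> 1"
    using assms by (simp add: powr_le1)
  then have factor_bound: "lam\<^sup>2 * \<delta> powr (2 * \<beta>) + 4 \<le> lam\<^sup>2 + 4"
    using mult_left_mono[of "\<delta> powr (2 * \<beta>)" 1 "lam\<^sup>2"] by simp
  have "\<bar>T2 a \<beta> lam \<xi> \<rho> \<delta>\<bar> = \<bar>C5 a \<rho>\<bar> * \<delta> * (lam\<^sup>2 * \<delta> powr (2 * \<beta>) + 4) * \<bar>I\<bar>"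
    unfolding T2_def I_def using assms by (simp add: abs_mult)
  also have "\<dots> \<le> \<bar>C5 a \<rho>\<bar> * \<delta> * (lam\<^sup>2 + 4) * (2 * \<xi> * k0 a \<beta> lam \<delta>)"
    using assms I_bound factor_bound by (intro mult_mono) auto
  also have "\<dots> = \<bar>C5 a \<rho>\<bar> * (lam\<^sup>2 + 4) * (2 * \<xi>) * (\<delta> * k0 a \<beta> lam \<delta>)"
    by simp
  finally show ?thesis .
qed

theorem lemma5p3:
  fixes a \<beta> lam \<xi> :: real and \<rho> :: "real \<times> real \<Rightarrow> real"
  assumes "a > 0" and "\<beta> > 0" and "feasible \<beta> lam"
    and "0 < \<xi>" and "\<xi> < a / 2"
    and "classP a \<rho>"
    and "d0 \<rho> \<ge> tau \<beta> * a"
  shows "((\<lambda>\<delta>. T2 a \<beta> lam \<xi> \<rho> \<delta>) \<longlongrightarrow> 0) (at_right 0)"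
proof -
  have "3 / 2 * a \<le> tau \<beta> * a"
    using tau_ge_three_halves[OF assms(2)] assms(1) by (intro mult_right_mono) auto
  with assms have gap: "\<xi> \<le> d0 \<rho> - a"
    by linarith
  have k0_nonneg: "\<forall>\<^sub>F \<delta> in at_right 0. 0 \<le> k0 a \<beta> lam \<delta>"
    by (rule k0_eventually_log_bounded[OF assms(1-3)])
  have below_one: "\<forall>\<^sub>F \<delta> in at_right (0::real). \<delta> < 1"
    by (intro eventually_at_rightI[of 0 1]) auto
  define K where "K = \<bar>C5 a \<rho>\<bar> * (lam\<^sup>2 + 4) * (2 * \<xi>)"
  have "\<forall>\<^sub>F \<delta> in at_right 0. norm (T2 a \<beta> lam \<xi> \<rho> \<delta>) \<le> K * (\<delta> * k0 a \<beta> lam \<delta>)"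
    using eventually_at_right_less[of 0] below_one k0_nonneg
    by eventually_elim (use abs_T2_le_delta_mult_k0 assms(2,4) gap in \<open>simp add: K_def\<close>)
  moreover have "((\<lambda>\<delta>. K * (\<delta> * k0 a \<beta> lam \<delta>)) \<longlongrightarrow> 0) (at_right 0)"
    using tendsto_mult_right_zero[OF delta_mult_k0_tendsto_zero[OF assms(1-3)]] by simp
  ultimately show ?thesis
    by (rule Lim_null_comparison)
qed

end
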